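(* Let $\beta>0$, let $F$ be symmetric, positive on $\Gamma_+$, homogeneous of degree 1, with $F^\beta(1,\dots,1)=1$ and $\partial F/\partial\lambda_i>0$, and let $G$ be a smooth positive function on $\{(x,X)\in\mathbb{S}^n\times\mathbb{R}^{n+1}:\langle x,X\rangle>0\}$ with $$\limsup_{s\to+\infty}\Big[\max_{x\in\mathbb{S}^n}G(x,sx)s^\beta\Big]<1<\liminf_{s\to0^+}\Big[\min_{x\in\mathbb{S}^n}G(x,sx)s^\beta\Big].$$ Let $u$ be a smooth, strictly convex (positive) solution of $\frac{\partial u}{\partial t}=\big(G(x,ux+Du)F^\beta(D^2u+uI)-1\big)u$ on $\mathbb{S}^n\times[0,T^* )$. Then $\frac1{C}\le u(x,t)\le C$ on $\mathbb{S}^n\times[0,T^* )$, where $C>0$ depends only on the two limits above, $\max_{\mathbb{S}^n}u(\cdot,0)$ and $\min_{\mathbb{S}^n}u(\cdot,0)$.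
   Context: $\Gamma_+=\{\lambda\in\mathbb{R}^n:\lambda_i>0\}$; $F$ is applied to symmetric matrices via eigenvalues. $D$ is covariant differentiation on the round $\mathbb{S}^n$, $I$ the identity; strictly convex means $D^2u+uI>0$. *)

theory Defs
  imports "HOL-Analysis.Analysis" "HOL-Library.Liminf_Limsup"
begin

definition ddir :: "'a::real_normed_vector \<Rightarrow> ('a \<Rightarrow> real) \<Rightarrow> ('a \<Rightarrow> real)" where
  "ddir v f = (\<lambda>x. frechet_derivative f (at x) v)"

definition smooth_on :: "'a::euclidean_space set \<Rightarrow> ('a \<Rightarrow> real) \<Rightarrow> bool" where
  "smooth_on S f \<longleftrightarrow> open S \<and>
     (\<forall>vs::'a list. \<forall>x\<in>S. (foldr ddir vs f) differentiable (at x))"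

definition smooth_on_set :: "'a::euclidean_space set \<Rightarrow> ('a \<Rightarrow> real) \<Rightarrow> bool" where
  "smooth_on_set A f \<longleftrightarrow> (\<exists>U g. A \<subseteq> U \<and> smooth_on U g \<and> (\<forall>p\<in>A. g p = f p))"

definition tangent :: "real^'m \<Rightarrow> (real^'m) set" where
  "tangent x = {v. v \<bullet> x = 0}"

text \<open>0-homogeneous extension of a function on the sphere to R^(n+1) - {0}.\<close>
definition sph_ext :: "(real^'m \<Rightarrow> real \<Rightarrow> real) \<Rightarrow> real \<Rightarrow> real^'m \<Rightarrow> real" where
  "sph_ext u t y = u (scaleR (1 / norm y) y) t"

text \<open>Spherical gradient Du (a tangent vector in R^(n+1)).\<close>
definition sph_grad :: "(real^'m \<Rightarrow> real \<Rightarrow> real) \<Rightarrow> real \<Rightarrow> real^'m \<Rightarrow> real^'m" where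
  "sph_grad u t x = (\<chi> i. frechet_derivative (sph_ext u t) (at x) (axis i 1))"

text \<open>Covariant Hessian D^2 u at x, applied to tangent vectors v w. For the 0-homogeneous
  extension (radial derivative 0) it equals the Euclidean Hessian restricted to T_x S^n.\<close>
definition sph_hess :: "(real^'m \<Rightarrow> real \<Rightarrow> real) \<Rightarrow> real \<Rightarrow> real^'m \<Rightarrow> real^'m \<Rightarrow> real^'m \<Rightarrow> real" where
  "sph_hess u t x v w = frechet_derivative (ddir v (sph_ext u t)) (at x) w"

definition Wform :: "(real^'m \<Rightarrow> real \<Rightarrow> real) \<Rightarrow> real \<Rightarrow> real^'m \<Rightarrow> real^'m \<Rightarrow> real^'m \<Rightarrow> real" where
  "Wform u t x v w = sph_hess u t x v w + u x t * (v \<bullet> w)"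

text \<open>lam is a tuple of eigenvalues of the symmetric form Q on T_x S^n (w.r.t. the round metric):
  there is an orthonormal family (hence basis, as CARD('k) = n) of T_x diagonalising Q.\<close>
definition is_eigs :: "real^'m \<Rightarrow> (real^'m \<Rightarrow> real^'m \<Rightarrow> real) \<Rightarrow> real^'k \<Rightarrow> bool" where
  "is_eigs x Q lam \<longleftrightarrow> (\<exists>e :: 'k \<Rightarrow> real^'m.
      (\<forall>i. e i \<in> tangent x) \<and>
      (\<forall>i j. e i \<bullet> e j = (if i = j then 1 else 0)) \<and>
      (\<forall>i j. Q (e i) (e j) = (if i = j then lam $ i else 0)))"

text \<open>F applied to a symmetric form via its eigenvalues (well defined since F is symmetric).\<close>
definition Fop :: "(real^'k \<Rightarrow> real) \<Rightarrow> real^'m \<Rightarrow> (real^'m \<Rightarrow> real^'m \<Rightarrow> real) \<Rightarrow> real" where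
  "Fop F x Q = F (SOME lam. is_eigs x Q lam)"

definition posdef_on_tangent :: "real^'m \<Rightarrow> (real^'m \<Rightarrow> real^'m \<Rightarrow> real) \<Rightarrow> bool" where
  "posdef_on_tangent x Q \<longleftrightarrow> (\<forall>v\<in>tangent x. v \<noteq> 0 \<longrightarrow> Q v v > 0)"

definition Gamma_plus :: "(real^'k) set" where
  "Gamma_plus = {lam. \<forall>i. lam $ i > 0}"

definition admissible_F :: "real \<Rightarrow> (real^'k \<Rightarrow> real) \<Rightarrow> bool" where
  "admissible_F \<beta> F \<longleftrightarrow>
     (\<forall>\<sigma> lam. \<sigma> permutes (UNIV::'k set) \<longrightarrow> lam \<in> Gamma_plus \<longrightarrow> F (\<chi> i. lam $ (\<sigma> i)) = F lam) \<and>
     (\<forall>lam\<in>Gamma_plus. F lam > 0) \<and>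
     (\<forall>s>0. \<forall>lam\<in>Gamma_plus. F (s *\<^sub>R lam) = s * F lam) \<and>
     (F (\<chi> i. 1)) powr \<beta> = 1 \<and>
     (\<forall>lam\<in>Gamma_plus. F differentiable (at lam) \<and>
        (\<forall>i. frechet_derivative F (at lam) (axis i 1) > 0))"

definition flow_solution ::
  "(real^'m \<Rightarrow> real^'m \<Rightarrow> real) \<Rightarrow> real \<Rightarrow> (real^'k \<Rightarrow> real) \<Rightarrow> (real^'m \<Rightarrow> real \<Rightarrow> real) \<Rightarrow> ereal \<Rightarrow> bool" where
  "flow_solution G \<beta> F u T \<longleftrightarrow>
     T > 0 \<and>
     smooth_on_set {(y, t). y \<noteq> 0 \<and> 0 \<le> t \<and> ereal t < T} (\<lambda>(y, t). sph_ext u t y) \<and>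
     (\<forall>x\<in>sphere 0 1. \<forall>t. 0 \<le> t \<and> ereal t < T \<longrightarrow>
        u x t > 0 \<and>
        posdef_on_tangent x (Wform u t x) \<and>
        ((\<lambda>s. u x s) has_real_derivative
            ((G x (u x t *\<^sub>R x + sph_grad u t x) * (Fop F x (Wform u t x)) powr \<beta> - 1) * u x t))
          (at t within {s. 0 \<le> s \<and> ereal s < T}))"

end

theory Submission
  imports Defs
begin

(*
  Maximum principle. Let (x0, t0) maximise u over S^n x [0, t]. If t0 = 0 the bound is the
  initial maximum. Otherwise Du = 0, D^2 u <= 0 and u_t >= 0 at (x0, t0), so every eigenvalue of
  D^2 u + u I is at most u, whence F(D^2 u + u I) <= u by monotonicity and homogeneity of F, and
  the equation forces G(x0, u x0) u^beta >= 1. This is impossible once u exceeds the radius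
  beyond which max G(x, s x) s^beta < 1. The lower bound is symmetric, using the limit at 0.
*)

section \<open>Smooth functions and their second derivatives\<close>

lemma smooth_on_open: "smooth_on W f \<Longrightarrow> open W"
  by (simp add: smooth_on_def)

lemma smooth_on_differentiable: "smooth_on W f \<Longrightarrow> x \<in> W \<Longrightarrow> f differentiable (at x)"
  using smooth_on_def[of W f] by (metis foldr_Nil id_apply)

lemma smooth_on_ddir_differentiable:
  "smooth_on W f \<Longrightarrow> x \<in> W \<Longrightarrow> ddir v f differentiable (at x)"
  using smooth_on_def[of W f] by (metis foldr.simps(2) foldr_Nil comp_id)

lemma smooth_on_ddir_ddir_continuous:
  "smooth_on W f \<Longrightarrow> x \<in> W \<Longrightarrow> continuous (at x) (ddir w (ddir v f))"
  using smooth_on_def[of W f] differentiable_imp_continuous_within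
  by (metis foldr.simps(2) foldr_Nil comp_id comp_apply)

lemma smooth_on_imp_continuous_on: "smooth_on W f \<Longrightarrow> continuous_on W f"
  by (metis continuous_at_imp_continuous_on differentiable_imp_continuous_within
      smooth_on_differentiable)

lemma smooth_on_set_imp_continuous_on:
  assumes "smooth_on_set A f"
  shows "continuous_on A f"
proof -
  obtain U g where "A \<subseteq> U" "smooth_on U g" "\<And>p. p \<in> A \<Longrightarrow> g p = f p"
    using assms by (auto simp: smooth_on_set_def)
  then show ?thesis
    by (metis continuous_on_eq continuous_on_subset smooth_on_imp_continuous_on)
qed

lemma smooth_on_cong:
  assumes g: "smooth_on U g" and W: "open W" "W \<subseteq> U" and eq: "\<And>y. y \<in> W \<Longrightarrow> f y = g y"
  shows "smooth_on W f"
proof -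
  have iterates: "\<forall>y\<in>W. foldr ddir vs f y = foldr ddir vs g y" for vs
  proof (induction vs)
    case Nil
    then show ?case using eq by simp
  next
    case (Cons v vs)
    have "frechet_derivative (foldr ddir vs g) (at y) = frechet_derivative (foldr ddir vs f) (at y)"
      if "y \<in> W" for y
      using g W Cons that
      by (intro frechet_derivative_transform_within_open[of _ _ W]) (auto simp: smooth_on_def)
    then show ?case by (simp add: ddir_def[of v])
  qed
  show ?thesis
    unfolding smooth_on_def
  proof (intro conjI allI ballI)
    fix vs y
    assume "y \<in> W"
    then obtain D where "(foldr ddir vs g has_derivative D) (at y)"
      using g W by (force simp: smooth_on_def differentiable_def)
    then have "(foldr ddir vs f has_derivative D) (at y)"
      by (rule has_derivative_transform_within_open[OF _ W(1) \<open>y \<in> W\<close>]) (use iterates in auto)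
    then show "foldr ddir vs f differentiable (at y)" by (auto simp: differentiable_def)
  qed fact
qed

lemma frechet_derivative_slice:
  fixes h :: "'a::real_normed_vector \<times> 'b::real_normed_vector \<Rightarrow> real"
  assumes h: "h differentiable (at (y, t))"
  shows "(\<lambda>y. h (y, t)) differentiable (at y)"
    and "frechet_derivative (\<lambda>y. h (y, t)) (at y) = (\<lambda>v. frechet_derivative h (at (y, t)) (v, 0))"
proof -
  have pair: "((\<lambda>y. (y, t)) has_derivative (\<lambda>v. (v, 0))) (at y)"
    by (intro derivative_eq_intros) auto
  then have "(\<lambda>y. (y, t)) differentiable (at y)" by (auto simp: differentiable_def)
  with h show "(\<lambda>y. h (y, t)) differentiable (at y)"
    using differentiable_chain_at[of "\<lambda>y. (y, t)" y h] by (simp add: o_def)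
  show "frechet_derivative (\<lambda>y. h (y, t)) (at y) = (\<lambda>v. frechet_derivative h (at (y, t)) (v, 0))"
    using frechet_derivative_compose[OF \<open>(\<lambda>y. (y, t)) differentiable (at y)\<close>, of h] h
      frechet_derivative_at[OF pair, symmetric]
    by (simp add: o_def)
qed

lemma smooth_on_slice:
  fixes g :: "'a::euclidean_space \<times> real \<Rightarrow> real"
  assumes g: "smooth_on U g"
  shows "smooth_on {y. (y, t) \<in> U} (\<lambda>y. g (y, t))"
proof -
  let ?Ut = "{y. (y, t) \<in> U}"
  have "open ((\<lambda>y. (y, t)) -` U)"
    using g by (intro continuous_open_vimage) (auto simp: smooth_on_def intro!: continuous_intros)
  then have Ut: "open ?Ut" by (simp add: vimage_def)
  let ?h = "\<lambda>vs. foldr ddir (map (\<lambda>v. (v, 0)) vs) g"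
  have h: "?h vs differentiable (at (y, t))" if "y \<in> ?Ut" for vs y
    using g that by (simp add: smooth_on_def)
  have iterates: "\<forall>y\<in>?Ut. foldr ddir vs (\<lambda>y. g (y, t)) y = ?h vs (y, t)" for vs
  proof (induction vs)
    case Nil
    then show ?case by simp
  next
    case (Cons v vs)
    have "frechet_derivative (foldr ddir vs (\<lambda>y. g (y, t))) (at y)
        = frechet_derivative (\<lambda>y. ?h vs (y, t)) (at y)" if "y \<in> ?Ut" for y
      using frechet_derivative_slice(1)[OF h] Ut that Cons
      by (intro frechet_derivative_transform_within_open[of _ _ ?Ut, symmetric]) auto
    then show ?case
      using frechet_derivative_slice(2)[OF h] by (simp add: ddir_def[of v] ddir_def[of "(v, 0)"])
  qed
  show ?thesis
    unfolding smooth_on_def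
  proof (intro conjI allI ballI)
    fix vs y
    assume y: "y \<in> ?Ut"
    then obtain D where "((\<lambda>y. ?h vs (y, t)) has_derivative D) (at y)"
      using frechet_derivative_slice(1)[OF h] by (force simp: differentiable_def)
    then have "(foldr ddir vs (\<lambda>y. g (y, t)) has_derivative D) (at y)"
      by (rule has_derivative_transform_within_open[OF _ Ut y]) (use iterates in auto)
    then show "foldr ddir vs (\<lambda>y. g (y, t)) differentiable (at y)" by (auto simp: differentiable_def)
  qed (fact Ut)
qed

lemma has_real_derivative_ddir_line:
  assumes "f differentiable (at (p + s *\<^sub>R v))"
  shows "((\<lambda>s. f (p + s *\<^sub>R v)) has_real_derivative ddir v f (p + s *\<^sub>R v)) (at s)"
proof -
  let ?D = "frechet_derivative f (at (p + s *\<^sub>R v))"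
  have "((\<lambda>s. p + s *\<^sub>R v) has_derivative (\<lambda>h. h *\<^sub>R v)) (at s)"
    by (intro derivative_eq_intros) auto
  from diff_chain_at[OF this, of f ?D] assms
  have "((\<lambda>s. f (p + s *\<^sub>R v)) has_derivative (\<lambda>h. ?D (h *\<^sub>R v))) (at s)"
    by (simp add: o_def frechet_derivative_works)
  moreover have "(\<lambda>h. ?D (h *\<^sub>R v)) = (*) (?D v)"
    using linear_frechet_derivative[OF assms] by (simp add: linear_scale fun_eq_iff)
  ultimately show ?thesis by (simp add: has_field_derivative_def ddir_def)
qed

lemma small_parallelogram_in_ball:
  fixes x v w :: "'a::real_normed_vector"
  assumes r: "r > 0"
  obtains h where "h > 0" "\<And>a b. \<bar>a\<bar> \<le> h \<Longrightarrow> \<bar>b\<bar> \<le> h \<Longrightarrow> x + a *\<^sub>R v + b *\<^sub>R w \<in> ball x r"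
proof
  have den: "norm v + norm w + 1 > 0" by (simp add: add_nonneg_pos)
  define h where "h = r / (norm v + norm w + 1)"
  show "h > 0" using r den by (simp add: h_def)
  fix a b :: real
  assume ab: "\<bar>a\<bar> \<le> h" "\<bar>b\<bar> \<le> h"
  have "norm (a *\<^sub>R v + b *\<^sub>R w) \<le> \<bar>a\<bar> * norm v + \<bar>b\<bar> * norm w"
    by (metis norm_scaleR norm_triangle_ineq)
  also have "\<dots> \<le> h * (norm v + norm w)"
    using ab by (simp add: distrib_left add_mono mult_right_mono)
  also have "\<dots> < h * (norm v + norm w + 1)"
    using \<open>h > 0\<close> by simp
  also have "\<dots> = r" using den by (simp add: h_def)
  moreover have "dist x (x + a *\<^sub>R v + b *\<^sub>R w) = norm (a *\<^sub>R v + b *\<^sub>R w)"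
    by (metis add.assoc add_diff_cancel_left' dist_norm dist_commute)
  ultimately show "x + a *\<^sub>R v + b *\<^sub>R w \<in> ball x r" by simp
qed

lemma second_difference_mean_value:
  fixes f :: "'a::euclidean_space \<Rightarrow> real"
  assumes f: "smooth_on W f" and h: "h > 0"
    and W: "\<And>a b. 0 \<le> a \<Longrightarrow> a \<le> h \<Longrightarrow> 0 \<le> b \<Longrightarrow> b \<le> h \<Longrightarrow> x + a *\<^sub>R v + b *\<^sub>R w \<in> W"
  obtains a b where "0 < a" "a < h" "0 < b" "b < h"
    "f (x + h *\<^sub>R v + h *\<^sub>R w) - f (x + h *\<^sub>R v) - f (x + h *\<^sub>R w) + f x
       = h\<^sup>2 * ddir w (ddir v f) (x + a *\<^sub>R v + b *\<^sub>R w)"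
proof -
  define \<phi> where "\<phi> s = f ((x + h *\<^sub>R w) + s *\<^sub>R v) - f (x + s *\<^sub>R v)" for s
  define \<phi>' where "\<phi>' s = ddir v f ((x + h *\<^sub>R w) + s *\<^sub>R v) - ddir v f (x + s *\<^sub>R v)" for s
  have "(\<phi> has_real_derivative \<phi>' s) (at s)" if "0 \<le> s" "s \<le> h" for s
    unfolding \<phi>_def \<phi>'_def
    using W[of s h] W[of s 0] that h
    by (intro DERIV_diff has_real_derivative_ddir_line smooth_on_differentiable[OF f])
      (auto simp: algebra_simps)
  then obtain a where a: "0 < a" "a < h" "\<phi> h - \<phi> 0 = h * \<phi>' a"
    using MVT2[OF h, of \<phi> \<phi>'] by auto
  define \<psi> where "\<psi> b = ddir v f ((x + a *\<^sub>R v) + b *\<^sub>R w)" for b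
  have "(\<psi> has_real_derivative ddir w (ddir v f) ((x + a *\<^sub>R v) + b *\<^sub>R w)) (at b)"
    if "0 \<le> b" "b \<le> h" for b
    unfolding \<psi>_def using W[of a b] that a
    by (intro has_real_derivative_ddir_line smooth_on_ddir_differentiable[OF f]) auto
  then obtain b where b: "0 < b" "b < h"
      "\<psi> h - \<psi> 0 = h * ddir w (ddir v f) ((x + a *\<^sub>R v) + b *\<^sub>R w)"
    using MVT2[OF h, of \<psi> "\<lambda>b. ddir w (ddir v f) ((x + a *\<^sub>R v) + b *\<^sub>R w)"] by auto
  have "\<phi> h - \<phi> 0 = f (x + h *\<^sub>R v + h *\<^sub>R w) - f (x + h *\<^sub>R v) - f (x + h *\<^sub>R w) + f x"
    unfolding \<phi>_def by (simp add: algebra_simps)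
  moreover have "\<phi>' a = \<psi> h - \<psi> 0"
    unfolding \<phi>'_def \<psi>_def by (simp add: algebra_simps)
  ultimately show ?thesis
    using that[OF a(1,2) b(1,2)] a(3) b(3) by (simp add: power2_eq_square)
qed

text \<open>Schwarz: both mixed derivatives are, at points near x, equal to the same second difference
  quotient, and both are continuous at x.\<close>

lemma smooth_on_ddir_ddir_commute:
  fixes f :: "'a::euclidean_space \<Rightarrow> real"
  assumes f: "smooth_on W f" and x: "x \<in> W"
  shows "ddir w (ddir v f) x = ddir v (ddir w f) x"
proof (rule ccontr)
  let ?A = "ddir w (ddir v f)" and ?B = "ddir v (ddir w f)"
  assume "?A x \<noteq> ?B x"
  define e where "e = \<bar>?A x - ?B x\<bar> / 2"
  have "e > 0" using \<open>?A x \<noteq> ?B x\<close> by (simp add: e_def)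
  obtain r where r: "r > 0" "ball x r \<subseteq> W"
    using smooth_on_open[OF f] x open_contains_ball by blast
  obtain dA where dA: "dA > 0" "\<And>y. dist y x < dA \<Longrightarrow> dist (?A y) (?A x) < e"
    using smooth_on_ddir_ddir_continuous[OF f x] \<open>e > 0\<close> unfolding continuous_at_eps_delta by blast
  obtain dB where dB: "dB > 0" "\<And>y. dist y x < dB \<Longrightarrow> dist (?B y) (?B x) < e"
    using smooth_on_ddir_ddir_continuous[OF f x] \<open>e > 0\<close> unfolding continuous_at_eps_delta by blast
  obtain h where h: "h > 0"
    and near: "\<And>a b. \<bar>a\<bar> \<le> h \<Longrightarrow> \<bar>b\<bar> \<le> h \<Longrightarrow> x + a *\<^sub>R v + b *\<^sub>R w \<in> ball x (min r (min dA dB))"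
    using small_parallelogram_in_ball[of "min r (min dA dB)" x v w] r(1) dA(1) dB(1) by auto
  have near': "x + a *\<^sub>R w + b *\<^sub>R v \<in> ball x (min r (min dA dB))" if "\<bar>a\<bar> \<le> h" "\<bar>b\<bar> \<le> h" for a b
    using near[OF that(2,1)] by (simp add: add_ac)
  have "ball x (min r (min dA dB)) \<subseteq> W" using r(2) by auto
  then have inW: "x + a *\<^sub>R v + b *\<^sub>R w \<in> W" "x + a *\<^sub>R w + b *\<^sub>R v \<in> W"
    if "0 \<le> a" "a \<le> h" "0 \<le> b" "b \<le> h" for a b
    using near[of a b] near'[of a b] that by auto
  obtain a1 b1 where ab1: "0 < a1" "a1 < h" "0 < b1" "b1 < h"
    "f (x + h *\<^sub>R v + h *\<^sub>R w) - f (x + h *\<^sub>R v) - f (x + h *\<^sub>R w) + f x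
       = h\<^sup>2 * ?A (x + a1 *\<^sub>R v + b1 *\<^sub>R w)"
    using second_difference_mean_value[OF f h, of x v w] inW(1) by blast
  obtain a2 b2 where ab2: "0 < a2" "a2 < h" "0 < b2" "b2 < h"
    "f (x + h *\<^sub>R w + h *\<^sub>R v) - f (x + h *\<^sub>R w) - f (x + h *\<^sub>R v) + f x
       = h\<^sup>2 * ?B (x + a2 *\<^sub>R w + b2 *\<^sub>R v)"
    using second_difference_mean_value[OF f h, of x w v] inW(2) by blast
  have "f (x + h *\<^sub>R w + h *\<^sub>R v) = f (x + h *\<^sub>R v + h *\<^sub>R w)" by (simp add: add_ac)
  then have "h\<^sup>2 * ?A (x + a1 *\<^sub>R v + b1 *\<^sub>R w) = h\<^sup>2 * ?B (x + a2 *\<^sub>R w + b2 *\<^sub>R v)"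
    using ab1(5) ab2(5) by linarith
  then have "?A (x + a1 *\<^sub>R v + b1 *\<^sub>R w) = ?B (x + a2 *\<^sub>R w + b2 *\<^sub>R v)"
    using h by simp
  moreover have "dist (?A (x + a1 *\<^sub>R v + b1 *\<^sub>R w)) (?A x) < e"
    using near[of a1 b1] ab1 by (intro dA(2)) (simp add: dist_commute)
  moreover have "dist (?B (x + a2 *\<^sub>R w + b2 *\<^sub>R v)) (?B x) < e"
    using near'[of a2 b2] ab2 by (intro dB(2)) (simp add: dist_commute)
  ultimately show False unfolding e_def dist_real_def by (simp add: abs_if split: if_splits)
qed

lemma smooth_on_hessian_bilinear:
  assumes f: "smooth_on W f" and x: "x \<in> W"
  shows "bilinear (\<lambda>v w. ddir w (ddir v f) x)"
proof -
  \<comment> \<open>linearity in w is that of a derivative; linearity in v then follows by symmetry\<close>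
  have "linear (\<lambda>w. ddir w (ddir v f) x)" for v
    using linear_frechet_derivative[OF smooth_on_ddir_differentiable[OF f x]]
    by (simp add: ddir_def[of _ "ddir v f"])
  moreover have "linear (\<lambda>v. ddir w (ddir v f) x)" for w
    using linear_frechet_derivative[OF smooth_on_ddir_differentiable[OF f x, of w]]
    by (simp add: smooth_on_ddir_ddir_commute[OF f x, of w] ddir_def[of _ "ddir w f"])
  ultimately show ?thesis by (simp add: bilinear_def)
qed

lemma smooth_on_extremum_frechet_derivative_zero:
  assumes f: "smooth_on W f" and x: "x \<in> W"
    and ext: "(\<forall>y\<in>W. f y \<le> f x) \<or> (\<forall>y\<in>W. f x \<le> f y)"
  shows "frechet_derivative f (at x) = (\<lambda>v. 0)"
  using differential_zero_maxmin[OF x smooth_on_open[OF f] _ ext] smooth_on_differentiable[OF f x]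
  by (simp add: frechet_derivative_works)

lemma second_derivative_nonpos_at_right_max:
  fixes \<phi> \<phi>' :: "real \<Rightarrow> real"
  assumes d: "d > 0"
    and \<phi>: "\<And>s. 0 \<le> s \<Longrightarrow> s < d \<Longrightarrow> (\<phi> has_real_derivative \<phi>' s) (at s)"
    and \<phi>': "(\<phi>' has_real_derivative a) (at 0)" "\<phi>' 0 = 0"
    and max: "\<And>s. 0 \<le> s \<Longrightarrow> s < d \<Longrightarrow> \<phi> s \<le> \<phi> 0"
  shows "a \<le> 0"
proof (rule ccontr)
  assume "\<not> a \<le> 0"
  then obtain e where e: "e > 0" "\<And>h. 0 < h \<Longrightarrow> h < e \<Longrightarrow> \<phi>' 0 < \<phi>' h"
    using has_real_derivative_pos_inc_right[OF \<phi>'(1)] by auto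
  define h where "h = min d e / 2"
  have h: "0 < h" "h < d" "h < e" using d e(1) by (auto simp: h_def)
  obtain c where c: "0 < c" "c < h" "\<phi> h - \<phi> 0 = h * \<phi>' c"
    using MVT2[OF h(1), of \<phi> \<phi>'] \<phi> h by force
  have "0 < h * \<phi>' c" using e(2)[of c] c h \<phi>'(2) by simp
  then show False using c(3) max[of h] h by simp
qed

lemma second_derivative_nonneg_at_right_min:
  fixes \<phi> \<phi>' :: "real \<Rightarrow> real"
  assumes d: "d > 0"
    and \<phi>: "\<And>s. 0 \<le> s \<Longrightarrow> s < d \<Longrightarrow> (\<phi> has_real_derivative \<phi>' s) (at s)"
    and \<phi>': "(\<phi>' has_real_derivative a) (at 0)" "\<phi>' 0 = 0"
    and min: "\<And>s. 0 \<le> s \<Longrightarrow> s < d \<Longrightarrow> \<phi> 0 \<le> \<phi> s"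
  shows "0 \<le> a"
  using second_derivative_nonpos_at_right_max[OF d, of "\<lambda>s. - \<phi> s" "\<lambda>s. - \<phi>' s" "- a"]
    \<phi> \<phi>' min by (auto intro: DERIV_minus)

lemma smooth_on_line_restriction:
  assumes f: "smooth_on W f" and x: "x \<in> W"
  obtains d where "d > 0"
    "\<And>s. 0 \<le> s \<Longrightarrow> s < d \<Longrightarrow> x + s *\<^sub>R v \<in> W"
    "\<And>s. 0 \<le> s \<Longrightarrow> s < d \<Longrightarrow>
       ((\<lambda>s. f (x + s *\<^sub>R v)) has_real_derivative ddir v f (x + s *\<^sub>R v)) (at s)"
    "((\<lambda>s. ddir v f (x + s *\<^sub>R v)) has_real_derivative ddir v (ddir v f) x) (at 0)"
proof -
  obtain r where r: "r > 0" "ball x r \<subseteq> W"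
    using smooth_on_open[OF f] x open_contains_ball by blast
  obtain d where d: "d > 0" "\<And>a b. \<bar>a\<bar> \<le> d \<Longrightarrow> \<bar>b\<bar> \<le> d \<Longrightarrow> x + a *\<^sub>R v + b *\<^sub>R 0 \<in> ball x r"
    using small_parallelogram_in_ball[OF r(1)] by blast
  have W: "x + s *\<^sub>R v \<in> W" if "0 \<le> s" "s < d" for s
    using d(2)[of s 0] that d(1) r(2) by auto
  show ?thesis
  proof (rule that[OF d(1) W])
    show "((\<lambda>s. f (x + s *\<^sub>R v)) has_real_derivative ddir v f (x + s *\<^sub>R v)) (at s)"
      if "0 \<le> s" "s < d" for s
      using W[OF that] by (intro has_real_derivative_ddir_line smooth_on_differentiable[OF f])
    show "((\<lambda>s. ddir v f (x + s *\<^sub>R v)) has_real_derivative ddir v (ddir v f) x) (at 0)"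
      using has_real_derivative_ddir_line[of "ddir v f" x 0 v] smooth_on_ddir_differentiable[OF f x]
      by simp
  qed
qed

lemma smooth_on_max_ddir_ddir_nonpos:
  assumes f: "smooth_on W f" and x: "x \<in> W" and max: "\<forall>y\<in>W. f y \<le> f x"
  shows "ddir v (ddir v f) x \<le> 0"
proof -
  obtain d where d: "d > 0" "\<And>s. 0 \<le> s \<Longrightarrow> s < d \<Longrightarrow> x + s *\<^sub>R v \<in> W"
    "\<And>s. 0 \<le> s \<Longrightarrow> s < d \<Longrightarrow>
       ((\<lambda>s. f (x + s *\<^sub>R v)) has_real_derivative ddir v f (x + s *\<^sub>R v)) (at s)"
    "((\<lambda>s. ddir v f (x + s *\<^sub>R v)) has_real_derivative ddir v (ddir v f) x) (at 0)"
    using smooth_on_line_restriction[OF f x] by blast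
  have "ddir v f x = 0"
    using smooth_on_extremum_frechet_derivative_zero[OF f x] max by (simp add: ddir_def)
  then show ?thesis
    using d max by (intro second_derivative_nonpos_at_right_max[OF d(1,3,4)]) auto
qed

lemma smooth_on_min_ddir_ddir_nonneg:
  assumes f: "smooth_on W f" and x: "x \<in> W" and min: "\<forall>y\<in>W. f x \<le> f y"
  shows "0 \<le> ddir v (ddir v f) x"
proof -
  obtain d where d: "d > 0" "\<And>s. 0 \<le> s \<Longrightarrow> s < d \<Longrightarrow> x + s *\<^sub>R v \<in> W"
    "\<And>s. 0 \<le> s \<Longrightarrow> s < d \<Longrightarrow>
       ((\<lambda>s. f (x + s *\<^sub>R v)) has_real_derivative ddir v f (x + s *\<^sub>R v)) (at s)"
    "((\<lambda>s. ddir v f (x + s *\<^sub>R v)) has_real_derivative ddir v (ddir v f) x) (at 0)"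
    using smooth_on_line_restriction[OF f x] by blast
  have "ddir v f x = 0"
    using smooth_on_extremum_frechet_derivative_zero[OF f x] min by (simp add: ddir_def)
  then show ?thesis
    using d min by (intro second_derivative_nonneg_at_right_min[OF d(1,3,4)]) auto
qed

lemma has_real_derivative_nonneg_at_left_max:
  fixes \<phi> :: "real \<Rightarrow> real"
  assumes \<phi>: "(\<phi> has_real_derivative D) (at t within S)" and "a < t" "{a..t} \<subseteq> S"
    and max: "\<And>s. a \<le> s \<Longrightarrow> s \<le> t \<Longrightarrow> \<phi> s \<le> \<phi> t"
  shows "0 \<le> D"
proof (rule ccontr)
  assume "\<not> 0 \<le> D"
  then obtain e where e: "e > 0" "\<And>h. 0 < h \<Longrightarrow> t - h \<in> S \<Longrightarrow> h < e \<Longrightarrow> \<phi> t < \<phi> (t - h)"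
    using has_real_derivative_neg_dec_left[OF \<phi>] by auto
  define h where "h = min e (t - a) / 2"
  have h: "0 < h" "h < e" "h < t - a" using e(1) \<open>a < t\<close> by (auto simp: h_def)
  then have "t - h \<in> S" using \<open>{a..t} \<subseteq> S\<close> by auto
  then show False using e(2)[OF h(1)] h max[of "t - h"] by fastforce
qed

lemma has_real_derivative_nonpos_at_left_min:
  fixes \<phi> :: "real \<Rightarrow> real"
  assumes \<phi>: "(\<phi> has_real_derivative D) (at t within S)" and "a < t" "{a..t} \<subseteq> S"
    and min: "\<And>s. a \<le> s \<Longrightarrow> s \<le> t \<Longrightarrow> \<phi> t \<le> \<phi> s"
  shows "D \<le> 0"
  using has_real_derivative_nonneg_at_left_max[OF DERIV_minus[OF \<phi>] assms(2,3)] min by auto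

section \<open>Symmetric bilinear forms on the tangent space\<close>

lemma linear_coefficient_zero_if_nonpos:
  fixes a b :: real
  assumes nonpos: "\<And>s. s * a + s\<^sup>2 * b \<le> 0"
  shows "a = 0"
proof (rule ccontr)
  assume "a \<noteq> 0"
  define c where "c = \<bar>b\<bar> + 1"
  have c: "c > 0" "c + b > 0" unfolding c_def by auto
  have "(a / c) * a + (a / c)\<^sup>2 * b = a\<^sup>2 * (c + b) / c\<^sup>2"
    using c by (simp add: field_simps power2_eq_square)
  also have "\<dots> > 0"
    using \<open>a \<noteq> 0\<close> c by (intro divide_pos_pos mult_pos_pos) auto
  finally show False using nonpos[of "a / c"] by simp
qed

lemma bilinear_quadratic_add_scaleR:
  assumes bl: "bilinear Q" and sym: "\<And>v w. Q v w = Q w v"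
  shows "Q (a + s *\<^sub>R b) (a + s *\<^sub>R b) = Q a a + 2 * s * Q a b + s\<^sup>2 * Q b b"
  using sym[of b a]
  by (simp add: bilinear_ladd[OF bl] bilinear_radd[OF bl] bilinear_lmul[OF bl] bilinear_rmul[OF bl]
      power2_eq_square algebra_simps)

lemma bilinear_quadratic_le_max_on_subspace:
  fixes Q :: "'a::euclidean_space \<Rightarrow> 'a \<Rightarrow> real"
  assumes bl: "bilinear Q" and S: "subspace S" and v: "v \<in> S"
    and le: "\<And>w. w \<in> S \<Longrightarrow> norm w = 1 \<Longrightarrow> Q w w \<le> l"
  shows "Q v v \<le> l * (norm v)\<^sup>2"
proof (cases "v = 0")
  case True
  then show ?thesis by (simp add: bilinear_lzero[OF bl])
next
  case False
  have "Q (v /\<^sub>R norm v) (v /\<^sub>R norm v) \<le> l"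
    using False S v by (intro le) (auto simp: subspace_scale)
  then show ?thesis
    using False by (simp add: bilinear_lmul[OF bl] bilinear_rmul[OF bl] field_simps power2_eq_square)
qed

lemma bilinear_maximiser_orthogonal:
  fixes Q :: "'a::euclidean_space \<Rightarrow> 'a \<Rightarrow> real"
  assumes bl: "bilinear Q" and sym: "\<And>v w. Q v w = Q w v" and S: "subspace S"
    and v: "v \<in> S" "norm v = 1" and max: "\<And>w. w \<in> S \<Longrightarrow> norm w = 1 \<Longrightarrow> Q w w \<le> Q v v"
    and w: "w \<in> S" "v \<bullet> w = 0"
  shows "Q v w = 0"
proof -
  have "s * (2 * Q v w) + s\<^sup>2 * (Q w w - Q v v * (norm w)\<^sup>2) \<le> 0" for s
  proof -
    have "v + s *\<^sub>R w \<in> S" using S v w by (simp add: subspace_add subspace_scale)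
    then have "Q (v + s *\<^sub>R w) (v + s *\<^sub>R w) \<le> Q v v * (norm (v + s *\<^sub>R w))\<^sup>2"
      using bilinear_quadratic_le_max_on_subspace[OF bl S _ max] by blast
    moreover have "(norm (v + s *\<^sub>R w))\<^sup>2 = 1 + s\<^sup>2 * (norm w)\<^sup>2"
      using v w unfolding power2_norm_eq_inner norm_eq_1
      by (simp add: inner_add_left inner_add_right inner_commute power2_eq_square)
    ultimately show ?thesis
      by (simp add: bilinear_quadratic_add_scaleR[OF bl sym] algebra_simps)
  qed
  then show ?thesis using linear_coefficient_zero_if_nonpos by fastforce
qed

lemma dim_le_dim_orthogonal_Suc:
  fixes S :: "'a::euclidean_space set"
  assumes S: "subspace S" and v: "v \<in> S" "norm v = 1"
  shows "dim S \<le> Suc (dim (S \<inter> {w. v \<bullet> w = 0}))"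
proof -
  let ?S' = "S \<inter> {w. v \<bullet> w = 0}"
  have "w \<in> span (insert v ?S')" if "w \<in> S" for w
  proof -
    have "w - (v \<bullet> w) *\<^sub>R v \<in> ?S'"
      using that S v by (auto simp: subspace_diff subspace_scale inner_diff_right norm_eq_1)
    then have "(v \<bullet> w) *\<^sub>R v + (w - (v \<bullet> w) *\<^sub>R v) \<in> span (insert v ?S')"
      by (intro span_add span_scale) (auto intro: span_base)
    then show ?thesis by simp
  qed
  then have "dim S \<le> dim (insert v ?S')" by (metis dim_span dim_subset subsetI)
  also have "\<dots> \<le> Suc (dim ?S')" by (simp add: dim_insert)
  finally show ?thesis .
qed

text \<open>Spectral theorem: peel off a maximiser of Q on the unit sphere of S and recurse on its
  orthogonal complement in S.\<close>

lemma symmetric_bilinear_orthonormal_diagonal_subset: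
  fixes Q :: "'a::euclidean_space \<Rightarrow> 'a \<Rightarrow> real"
  assumes bl: "bilinear Q" and sym: "\<And>v w. Q v w = Q w v"
    and "subspace S" and "d \<le> dim S"
  shows "\<exists>B\<subseteq>S. finite B \<and> card B = d \<and> (\<forall>b\<in>B. norm b = 1) \<and>
           pairwise (\<lambda>b c. b \<bullet> c = 0 \<and> Q b c = 0) B"
  using assms(3,4)
proof (induction d arbitrary: S)
  case 0
  then show ?case by (intro exI[of _ "{}"]) auto
next
  case (Suc d)
  let ?K = "S \<inter> sphere 0 1"
  obtain z where z: "z \<in> S" "z \<noteq> 0"
    using Suc.prems by (metis dim_eq_0 not_less_eq_eq subsetI singletonI zero_le)
  then have "z /\<^sub>R norm z \<in> ?K" using Suc.prems(1) by (simp add: subspace_scale)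
  moreover have "compact ?K" using Suc.prems(1) by (simp add: closed_Int_compact closed_subspace)
  moreover have "continuous_on ?K (\<lambda>v. Q v v)"
    using bl by (intro continuous_intros bounded_bilinear.continuous_on[of Q])
      (auto simp: bilinear_conv_bounded_bilinear)
  ultimately obtain v where v: "v \<in> ?K" and max: "\<And>w. w \<in> ?K \<Longrightarrow> Q w w \<le> Q v v"
    using continuous_attains_sup[of ?K "\<lambda>v. Q v v"] by blast
  let ?S' = "S \<inter> {w. v \<bullet> w = 0}"
  have "subspace ?S'" using Suc.prems(1) subspace_hyperplane by (rule subspace_inter)
  moreover have "d \<le> dim ?S'"
    using Suc.prems dim_le_dim_orthogonal_Suc[OF Suc.prems(1), of v] v by simp
  ultimately obtain B where B: "B \<subseteq> ?S'" "finite B" "card B = d" "\<forall>b\<in>B. norm b = 1"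
    "pairwise (\<lambda>b c. b \<bullet> c = 0 \<and> Q b c = 0) B"
    using Suc.IH by blast
  have orth: "v \<bullet> c = 0 \<and> Q v c = 0" if "c \<in> B" for c
    using that B(1) v max bilinear_maximiser_orthogonal[OF bl sym Suc.prems(1), of v c] by auto
  then have "v \<notin> B" using v by fastforce
  show ?case
  proof (intro exI[of _ "insert v B"] conjI)
    show "pairwise (\<lambda>b c. b \<bullet> c = 0 \<and> Q b c = 0) (insert v B)"
      using B(5) orth sym by (auto simp: pairwise_insert inner_commute)
  qed (use B v \<open>v \<notin> B\<close> in auto)
qed

lemma is_eigs_exists:
  fixes x :: "real^'m" and Q :: "real^'m \<Rightarrow> real^'m \<Rightarrow> real"
  assumes dim: "CARD('m) = Suc CARD('k)" and x: "x \<noteq> 0"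
    and bl: "bilinear Q" and sym: "\<And>v w. Q v w = Q w v"
  shows "\<exists>lam :: real^'k. is_eigs x Q lam"
proof -
  have tangent: "tangent x = {v. x \<bullet> v = 0}" by (auto simp: tangent_def inner_commute)
  have "dim (tangent x) = CARD('k)" using dim_hyperplane[OF x] dim by (simp add: tangent)
  then obtain B where B: "B \<subseteq> tangent x" "finite B" "card B = CARD('k)" "\<forall>b\<in>B. norm b = 1"
      "pairwise (\<lambda>b c. b \<bullet> c = 0 \<and> Q b c = 0) B"
    using symmetric_bilinear_orthonormal_diagonal_subset[OF bl sym, of "tangent x" "CARD('k)"]
    by (auto simp: tangent subspace_hyperplane)
  obtain e where e: "bij_betw e (UNIV :: 'k set) B"
    using finite_same_card_bij[of "UNIV :: 'k set" B] B by auto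
  then have "e i \<in> B" "e i = e j \<longleftrightarrow> i = j" for i j
    by (auto simp: bij_betw_def inj_eq)
  then have "is_eigs x Q (\<chi> i. Q (e i) (e i))"
    unfolding is_eigs_def using B
    by (intro exI[of _ e]) (auto simp: pairwise_def norm_eq_1)
  then show ?thesis by blast
qed

lemma bilinear_add_scaled_inner:
  assumes "bilinear Q"
  shows "bilinear (\<lambda>v w. Q v w + c * (v \<bullet> w))"
  using assms
  by (auto simp: bilinear_def linear_iff inner_add_left inner_add_right algebra_simps)

text \<open>\<^const>\<open>Fop\<close> chooses its eigenvalue tuple with SOME; only the spectral theorem guarantees that
  the chosen tuple really consists of values \<open>Q e e\<close> on unit tangent vectors.\<close>

lemma Fop_eq_F_eigenvalues:
  fixes F :: "real^'k \<Rightarrow> real" and x :: "real^'m"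
  assumes dim: "CARD('m) = Suc CARD('k)" and x: "x \<noteq> 0" and bl: "bilinear Q"
    and sym: "\<And>v w. Q v w = Q w v" and pd: "posdef_on_tangent x Q"
  shows "\<exists>lam e. Fop F x Q = F lam \<and> lam \<in> Gamma_plus \<and>
           (\<forall>i. e i \<in> tangent x \<and> e i \<bullet> e i = 1 \<and> lam $ i = Q (e i) (e i))"
proof -
  define lam :: "real^'k" where "lam = (SOME lam. is_eigs x Q lam)"
  have "is_eigs x Q lam" unfolding lam_def by (rule someI_ex[OF is_eigs_exists[OF dim x bl sym]])
  then obtain e :: "'k \<Rightarrow> real^'m" where e: "\<forall>i. e i \<in> tangent x \<and> e i \<bullet> e i = 1 \<and> lam $ i = Q (e i) (e i)"
    unfolding is_eigs_def by (metis (full_types))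
  have "lam $ i > 0" for i
  proof -
    have "e i \<noteq> 0" using e by (metis inner_zero_left zero_neq_one)
    then show ?thesis using pd e unfolding posdef_on_tangent_def by auto
  qed
  then have "lam \<in> Gamma_plus" by (simp add: Gamma_plus_def)
  moreover have "Fop F x Q = F lam" by (simp add: Fop_def lam_def)
  ultimately show ?thesis using e by blast
qed

section \<open>Admissible functions of the eigenvalues\<close>

lemma convex_Gamma_plus: "convex Gamma_plus"
proof (rule convexI)
  fix x y :: "real^'k" and u v :: real
  assume "x \<in> Gamma_plus" "y \<in> Gamma_plus" "0 \<le> u" "0 \<le> v" "u + v = 1"
  then have "0 < u * x $ i + v * y $ i" for i
    by (cases "u = 0") (auto simp: Gamma_plus_def less_imp_le intro!: add_pos_nonneg)
  then show "u *\<^sub>R x + v *\<^sub>R y \<in> Gamma_plus" by (simp add: Gamma_plus_def)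
qed

lemma admissible_F_one:
  assumes F: "admissible_F \<beta> F" and \<beta>: "\<beta> \<noteq> 0"
  shows "F (\<chi> i. 1) = 1"
proof -
  have "(\<chi> i. 1) \<in> Gamma_plus" by (simp add: Gamma_plus_def)
  then have "F (\<chi> i. 1) > 0" "F (\<chi> i. 1) powr \<beta> = 1" using F by (auto simp: admissible_F_def)
  then show ?thesis using \<beta> powr_eq_one_iff_gen[of "F (\<chi> i. 1)" \<beta>] by auto
qed

lemma admissible_F_scaleR_one:
  assumes F: "admissible_F \<beta> F" and "\<beta> \<noteq> 0" "c > 0"
  shows "F (c *\<^sub>R (\<chi> i. 1)) = c"
proof -
  have "(\<chi> i. 1) \<in> Gamma_plus" by (simp add: Gamma_plus_def)
  moreover have "\<forall>s>0. \<forall>lam\<in>Gamma_plus. F (s *\<^sub>R lam) = s * F lam"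
    using F by (simp add: admissible_F_def)
  ultimately have "F (c *\<^sub>R (\<chi> i. 1)) = c * F (\<chi> i. 1)" using \<open>c > 0\<close> by blast
  then show ?thesis using admissible_F_one[OF F \<open>\<beta> \<noteq> 0\<close>] by simp
qed

lemma admissible_F_ddir_nonneg:
  fixes F :: "real^'k \<Rightarrow> real"
  assumes F: "admissible_F \<beta> F" and lam: "lam \<in> Gamma_plus" and d: "\<And>i. 0 \<le> d $ i"
  shows "0 \<le> ddir d F lam"
proof -
  let ?D = "frechet_derivative F (at lam)"
  have "linear ?D" and pos: "\<And>i. ?D (axis i 1) > 0"
    using F lam by (auto simp: admissible_F_def intro: linear_frechet_derivative)
  have "d = (\<Sum>i\<in>UNIV. d $ i *\<^sub>R axis i 1)"
    using basis_expansion[of d] by (simp add: scalar_mult_eq_scaleR)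
  then have "?D d = ?D (\<Sum>i\<in>UNIV. d $ i *\<^sub>R axis i 1)" by simp
  also have "\<dots> = (\<Sum>i\<in>UNIV. d $ i * ?D (axis i 1))"
    by (simp add: linear_sum[OF \<open>linear ?D\<close>] linear_scale[OF \<open>linear ?D\<close>])
  also have "\<dots> \<ge> 0"
    using pos d by (intro sum_nonneg mult_nonneg_nonneg) (auto simp: less_imp_le)
  finally show ?thesis by (simp add: ddir_def)
qed

lemma admissible_F_mono:
  fixes F :: "real^'k \<Rightarrow> real"
  assumes F: "admissible_F \<beta> F" and lam: "lam \<in> Gamma_plus" and mu: "mu \<in> Gamma_plus"
    and le: "\<And>i. lam $ i \<le> mu $ i"
  shows "F lam \<le> F mu"
proof -
  have segment: "lam + s *\<^sub>R (mu - lam) \<in> Gamma_plus" if "0 \<le> s" "s \<le> 1" for s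
    using convexD[OF convex_Gamma_plus lam mu, of "1 - s" s] that by (simp add: algebra_simps)
  have "F (lam + 0 *\<^sub>R (mu - lam)) \<le> F (lam + 1 *\<^sub>R (mu - lam))"
  proof (rule DERIV_nonneg_imp_nondecreasing[of 0 1])
    fix s :: real
    assume "0 \<le> s" "s \<le> 1"
    then have "F differentiable (at (lam + s *\<^sub>R (mu - lam)))"
      and "0 \<le> ddir (mu - lam) F (lam + s *\<^sub>R (mu - lam))"
      using F segment le by (auto simp: admissible_F_def intro: admissible_F_ddir_nonneg)
    then show "\<exists>y. ((\<lambda>s. F (lam + s *\<^sub>R (mu - lam))) has_real_derivative y) (at s) \<and> 0 \<le> y"
      using has_real_derivative_ddir_line[of F lam s "mu - lam"] by blast
  qed simp
  then show ?thesis by simp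
qed

section \<open>The maximum principle for the flow\<close>

lemma sph_ext_eq: "norm x = 1 \<Longrightarrow> sph_ext u t x = u x t"
  by (simp add: sph_ext_def)

lemma sph_ext_max:
  assumes "x \<in> sphere 0 1" and "\<forall>y\<in>sphere 0 1. u y t \<le> u x t"
  shows "\<forall>y\<in>{y. y \<noteq> 0}. sph_ext u t y \<le> sph_ext u t x"
  using assms by (simp add: sph_ext_def)

lemma sph_ext_min:
  assumes "x \<in> sphere 0 1" and "\<forall>y\<in>sphere 0 1. u x t \<le> u y t"
  shows "\<forall>y\<in>{y. y \<noteq> 0}. sph_ext u t x \<le> sph_ext u t y"
  using assms by (simp add: sph_ext_def)

lemma Wform_eq_hessian:
  "norm x = 1 \<Longrightarrow> Wform u t x v w = ddir w (ddir v (sph_ext u t)) x + u x t * (v \<bullet> w)"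
  by (simp add: Wform_def sph_hess_def ddir_def[of w] sph_ext_eq)

lemma sphere_bdd_above_G:
  fixes G :: "real^'m \<Rightarrow> real^'m \<Rightarrow> real"
  assumes G: "smooth_on_set {(x, X). x \<in> sphere 0 1 \<and> x \<bullet> X > 0} (\<lambda>(x, X). G x X)"
    and s: "s > 0"
  shows "bdd_above ((\<lambda>x. G x (s *\<^sub>R x)) ` sphere 0 1)"
proof -
  have "continuous_on {(x, X). x \<in> sphere 0 1 \<and> x \<bullet> X > 0} (\<lambda>(x, X). G x X)"
    using G by (rule smooth_on_set_imp_continuous_on)
  moreover have "(\<lambda>x. (x, s *\<^sub>R x)) ` sphere 0 1 \<subseteq> {(x, X). x \<in> sphere 0 1 \<and> x \<bullet> X > 0}"
    using s by (auto simp: dot_square_norm)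
  moreover have "continuous_on (sphere 0 1) (\<lambda>x::real^'m. (x, s *\<^sub>R x))"
    by (intro continuous_intros)
  ultimately have "continuous_on (sphere 0 1) (\<lambda>x. G x (s *\<^sub>R x))"
    using continuous_on_compose2 by fastforce
  then show ?thesis
    by (intro bounded_imp_bdd_above compact_imp_bounded compact_continuous_image compact_sphere)
qed

locale convex_flow =
  fixes G :: "real^'m \<Rightarrow> real^'m \<Rightarrow> real" and \<beta> :: real and F :: "real^'k \<Rightarrow> real"
    and u :: "real^'m \<Rightarrow> real \<Rightarrow> real" and T :: ereal
  assumes dim: "CARD('m) = Suc CARD('k)"
    and beta: "\<beta> > 0"
    and G_pos: "\<forall>x\<in>sphere 0 1. \<forall>X. x \<bullet> X > 0 \<longrightarrow> G x X > 0"
    and admissible: "admissible_F \<beta> F"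
    and flow: "flow_solution G \<beta> F u T"
begin

abbreviation time_domain :: "real set" where
  "time_domain \<equiv> {s. 0 \<le> s \<and> ereal s < T}"

lemma solution_at:
  assumes "x \<in> sphere 0 1" "0 \<le> t" "ereal t < T"
  shows "u x t > 0" and "posdef_on_tangent x (Wform u t x)"
    and "(u x has_real_derivative
           (G x (u x t *\<^sub>R x + sph_grad u t x) * Fop F x (Wform u t x) powr \<beta> - 1) * u x t)
         (at t within time_domain)"
  using flow assms by (auto simp: flow_solution_def)

lemma smooth_on_sph_ext:
  assumes "0 \<le> t" "ereal t < T"
  shows "smooth_on {y. y \<noteq> 0} (sph_ext u t)"
proof -
  obtain U g where U: "{(y, t). y \<noteq> 0 \<and> 0 \<le> t \<and> ereal t < T} \<subseteq> U" "smooth_on U g"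
    and eq: "\<forall>p\<in>{(y, t). y \<noteq> 0 \<and> 0 \<le> t \<and> ereal t < T}. g p = (\<lambda>(y, t). sph_ext u t y) p"
    using flow by (auto simp: flow_solution_def smooth_on_set_def)
  have "open {y :: real^'m. y \<noteq> 0}" using open_delete[OF open_UNIV, of 0] by (simp add: set_diff_eq)
  then show ?thesis
    using U eq assms by (intro smooth_on_cong[OF smooth_on_slice[OF U(2), of t]]) auto
qed

lemma continuous_on_sphere_times:
  assumes "ereal t < T"
  shows "continuous_on (sphere 0 1 \<times> {0..t}) (\<lambda>(x, s). u x s)"
proof -
  have "continuous_on {(y, t). y \<noteq> 0 \<and> 0 \<le> t \<and> ereal t < T} (\<lambda>(y, t). sph_ext u t y)"
    using flow by (intro smooth_on_set_imp_continuous_on) (simp add: flow_solution_def)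
  moreover have "sphere 0 1 \<times> {0..t} \<subseteq> {(y, t). y \<noteq> 0 \<and> 0 \<le> t \<and> ereal t < T}"
    using assms by (auto intro: le_less_trans[of _ "ereal t"])
  ultimately show ?thesis
    by (rule continuous_on_subset[THEN continuous_on_eq]) (auto simp: sph_ext_eq)
qed

lemma attains_max:
  assumes "0 \<le> t" "ereal t < T"
  obtains x0 t0 where "x0 \<in> sphere 0 1" "0 \<le> t0" "t0 \<le> t"
    "\<And>x s. x \<in> sphere 0 1 \<Longrightarrow> 0 \<le> s \<Longrightarrow> s \<le> t \<Longrightarrow> u x s \<le> u x0 t0"
proof -
  have "compact (sphere (0::real^'m) 1 \<times> {0..t})" "sphere (0::real^'m) 1 \<times> {0..t} \<noteq> {}"
    using assms(1) by (auto intro: compact_Times)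
  from continuous_attains_sup[OF this continuous_on_sphere_times[OF assms(2)]] that
  show ?thesis by fastforce
qed

lemma attains_min:
  assumes "0 \<le> t" "ereal t < T"
  obtains x0 t0 where "x0 \<in> sphere 0 1" "0 \<le> t0" "t0 \<le> t"
    "\<And>x s. x \<in> sphere 0 1 \<Longrightarrow> 0 \<le> s \<Longrightarrow> s \<le> t \<Longrightarrow> u x0 t0 \<le> u x s"
proof -
  have "compact (sphere (0::real^'m) 1 \<times> {0..t})" "sphere (0::real^'m) 1 \<times> {0..t} \<noteq> {}"
    using assms(1) by (auto intro: compact_Times)
  from continuous_attains_inf[OF this continuous_on_sphere_times[OF assms(2)]] that
  show ?thesis by fastforce
qed

lemma initial_INF_pos: "0 < (INF x\<in>sphere 0 1. u x 0)"
proof -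
  have "ereal 0 < T" using flow by (simp add: flow_solution_def zero_ereal_def)
  then obtain x0 t0 where x0: "x0 \<in> sphere 0 1" "t0 = 0" "\<And>x. x \<in> sphere 0 1 \<Longrightarrow> u x0 0 \<le> u x 0"
    using attains_min[of 0] by (metis order.refl order_antisym)
  have "0 < u x0 0" using solution_at(1) x0 \<open>ereal 0 < T\<close> by simp
  also have "\<dots> \<le> (INF x\<in>sphere 0 1. u x 0)"
    using x0 by (intro cINF_greatest) auto
  finally show ?thesis .
qed

lemma speed_at_spatial_extremum:
  assumes x0: "x0 \<in> sphere 0 1" and t0: "0 \<le> t0" "ereal t0 < T"
    and ext: "(\<forall>y\<in>sphere 0 1. u y t0 \<le> u x0 t0) \<or> (\<forall>y\<in>sphere 0 1. u x0 t0 \<le> u y t0)"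
  obtains lam e where "lam \<in> Gamma_plus"
    "\<And>i. lam $ i = ddir (e i) (ddir (e i) (sph_ext u t0)) x0 + u x0 t0"
    "(u x0 has_real_derivative (G x0 (u x0 t0 *\<^sub>R x0) * F lam powr \<beta> - 1) * u x0 t0)
       (at t0 within time_domain)"
proof -
  let ?f = "sph_ext u t0" and ?W = "{y :: real^'m. y \<noteq> 0}"
  have f: "smooth_on ?W ?f" and x0W: "x0 \<in> ?W" and nx0: "norm x0 = 1"
    using smooth_on_sph_ext[OF t0] x0 by auto
  have "(\<forall>y\<in>?W. ?f y \<le> ?f x0) \<or> (\<forall>y\<in>?W. ?f x0 \<le> ?f y)"
    using ext sph_ext_max[OF x0] sph_ext_min[OF x0] by blast
  then have "frechet_derivative ?f (at x0) = (\<lambda>v. 0)"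
    by (rule smooth_on_extremum_frechet_derivative_zero[OF f x0W])
  then have grad: "sph_grad u t0 x0 = 0" by (simp add: sph_grad_def vec_eq_iff)
  have W: "Wform u t0 x0 = (\<lambda>v w. ddir w (ddir v ?f) x0 + u x0 t0 * (v \<bullet> w))"
    using Wform_eq_hessian[OF nx0] by blast
  have "bilinear (Wform u t0 x0)"
    unfolding W by (intro bilinear_add_scaled_inner smooth_on_hessian_bilinear[OF f x0W])
  moreover have "Wform u t0 x0 v w = Wform u t0 x0 w v" for v w
    unfolding W using smooth_on_ddir_ddir_commute[OF f x0W] by (simp add: inner_commute)
  ultimately obtain lam e where lam: "Fop F x0 (Wform u t0 x0) = F lam" "lam \<in> Gamma_plus"
      "\<And>i. e i \<bullet> e i = 1 \<and> lam $ i = Wform u t0 x0 (e i) (e i)"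
    using Fop_eq_F_eigenvalues[OF dim _ _ _ solution_at(2)[OF x0 t0], of F] x0W by blast
  show ?thesis
  proof (rule that[OF lam(2)])
    show "lam $ i = ddir (e i) (ddir (e i) ?f) x0 + u x0 t0" for i
      using lam(3)[of i] by (simp add: W)
    show "(u x0 has_real_derivative (G x0 (u x0 t0 *\<^sub>R x0) * F lam powr \<beta> - 1) * u x0 t0)
        (at t0 within time_domain)"
      using solution_at(3)[OF x0 t0] grad lam(1) by simp
  qed
qed

lemma speed_at_spatial_max:
  assumes x0: "x0 \<in> sphere 0 1" and t0: "0 \<le> t0" "ereal t0 < T"
    and max: "\<forall>y\<in>sphere 0 1. u y t0 \<le> u x0 t0"
  obtains \<Phi> where "0 < \<Phi>" "\<Phi> \<le> u x0 t0"
    "(u x0 has_real_derivative (G x0 (u x0 t0 *\<^sub>R x0) * \<Phi> powr \<beta> - 1) * u x0 t0)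
       (at t0 within time_domain)"
proof -
  obtain lam e where lam: "lam \<in> Gamma_plus"
      "\<And>i. lam $ i = ddir (e i) (ddir (e i) (sph_ext u t0)) x0 + u x0 t0"
      "(u x0 has_real_derivative (G x0 (u x0 t0 *\<^sub>R x0) * F lam powr \<beta> - 1) * u x0 t0)
         (at t0 within time_domain)"
    using speed_at_spatial_extremum[OF x0 t0] max by blast
  have "lam $ i \<le> u x0 t0" for i
    using smooth_on_max_ddir_ddir_nonpos[OF smooth_on_sph_ext[OF t0] _ sph_ext_max[of x0 u t0, OF x0 max]] x0 lam(2)
    by fastforce
  moreover have pos: "u x0 t0 > 0" using solution_at(1)[OF x0 t0] .
  ultimately have "F lam \<le> F (u x0 t0 *\<^sub>R (\<chi> i. 1))"
    by (intro admissible_F_mono[OF admissible lam(1)]) (auto simp: Gamma_plus_def)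
  also have "\<dots> = u x0 t0" using admissible_F_scaleR_one[OF admissible _ pos] beta by simp
  finally show ?thesis
    using that admissible lam(1,3) by (auto simp: admissible_F_def)
qed

lemma speed_at_spatial_min:
  assumes x0: "x0 \<in> sphere 0 1" and t0: "0 \<le> t0" "ereal t0 < T"
    and min: "\<forall>y\<in>sphere 0 1. u x0 t0 \<le> u y t0"
  obtains \<Phi> where "u x0 t0 \<le> \<Phi>"
    "(u x0 has_real_derivative (G x0 (u x0 t0 *\<^sub>R x0) * \<Phi> powr \<beta> - 1) * u x0 t0)
       (at t0 within time_domain)"
proof -
  obtain lam e where lam: "lam \<in> Gamma_plus"
      "\<And>i. lam $ i = ddir (e i) (ddir (e i) (sph_ext u t0)) x0 + u x0 t0"
      "(u x0 has_real_derivative (G x0 (u x0 t0 *\<^sub>R x0) * F lam powr \<beta> - 1) * u x0 t0)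
         (at t0 within time_domain)"
    using speed_at_spatial_extremum[OF x0 t0] min by blast
  have "u x0 t0 \<le> lam $ i" for i
    using smooth_on_min_ddir_ddir_nonneg[OF smooth_on_sph_ext[OF t0] _ sph_ext_min[of x0 u t0, OF x0 min]] x0 lam(2)
    by fastforce
  moreover have pos: "u x0 t0 > 0" using solution_at(1)[OF x0 t0] .
  ultimately have "F (u x0 t0 *\<^sub>R (\<chi> i. 1)) \<le> F lam"
    by (intro admissible_F_mono[OF admissible _ lam(1)]) (auto simp: Gamma_plus_def)
  moreover have "F (u x0 t0 *\<^sub>R (\<chi> i. 1)) = u x0 t0"
    using admissible_F_scaleR_one[OF admissible _ pos] beta by simp
  ultimately show ?thesis using that lam(3) by simp
qed

lemma G_at_radial_point_pos:
  assumes "x \<in> sphere 0 1" "s > 0"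
  shows "G x (s *\<^sub>R x) > 0"
  using G_pos assms by (simp add: dot_square_norm)

lemma inequality_at_max_point:
  assumes x0: "x0 \<in> sphere 0 1" and t0: "0 < t0" "ereal t0 < T"
    and max: "\<And>x s. x \<in> sphere 0 1 \<Longrightarrow> 0 \<le> s \<Longrightarrow> s \<le> t0 \<Longrightarrow> u x s \<le> u x0 t0"
  shows "1 \<le> G x0 (u x0 t0 *\<^sub>R x0) * u x0 t0 powr \<beta>"
proof -
  let ?s = "u x0 t0"
  have s: "?s > 0" using solution_at(1)[OF x0 _ t0(2)] t0 by simp
  obtain \<Phi> where \<Phi>: "0 < \<Phi>" "\<Phi> \<le> ?s"
    and speed: "(u x0 has_real_derivative (G x0 (?s *\<^sub>R x0) * \<Phi> powr \<beta> - 1) * ?s)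
      (at t0 within time_domain)"
    using speed_at_spatial_max[OF x0 _ t0(2)] t0 max x0 by auto
  have "{0..t0} \<subseteq> time_domain" using t0 by (auto intro: le_less_trans[of _ "ereal t0"])
  then have "0 \<le> (G x0 (?s *\<^sub>R x0) * \<Phi> powr \<beta> - 1) * ?s"
    using max x0 by (intro has_real_derivative_nonneg_at_left_max[OF speed t0(1)]) auto
  then have "1 \<le> G x0 (?s *\<^sub>R x0) * \<Phi> powr \<beta>" using s by (simp add: zero_le_mult_iff)
  also have "\<dots> \<le> G x0 (?s *\<^sub>R x0) * ?s powr \<beta>"
    using \<Phi> beta G_at_radial_point_pos[OF x0 s] by (intro mult_left_mono powr_mono2) auto
  finally show ?thesis .
qed

lemma inequality_at_min_point:
  assumes x0: "x0 \<in> sphere 0 1" and t0: "0 < t0" "ereal t0 < T"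
    and min: "\<And>x s. x \<in> sphere 0 1 \<Longrightarrow> 0 \<le> s \<Longrightarrow> s \<le> t0 \<Longrightarrow> u x0 t0 \<le> u x s"
  shows "G x0 (u x0 t0 *\<^sub>R x0) * u x0 t0 powr \<beta> \<le> 1"
proof -
  let ?s = "u x0 t0"
  have s: "?s > 0" using solution_at(1)[OF x0 _ t0(2)] t0 by simp
  obtain \<Phi> where \<Phi>: "?s \<le> \<Phi>"
    and speed: "(u x0 has_real_derivative (G x0 (?s *\<^sub>R x0) * \<Phi> powr \<beta> - 1) * ?s)
      (at t0 within time_domain)"
    using speed_at_spatial_min[OF x0 _ t0(2)] t0 min x0 by auto
  have "{0..t0} \<subseteq> time_domain" using t0 by (auto intro: le_less_trans[of _ "ereal t0"])
  then have "(G x0 (?s *\<^sub>R x0) * \<Phi> powr \<beta> - 1) * ?s \<le> 0"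
    using min x0 by (intro has_real_derivative_nonpos_at_left_min[OF speed t0(1)]) auto
  then have "G x0 (?s *\<^sub>R x0) * \<Phi> powr \<beta> \<le> 1" using s by (simp add: mult_le_0_iff)
  moreover have "G x0 (?s *\<^sub>R x0) * ?s powr \<beta> \<le> G x0 (?s *\<^sub>R x0) * \<Phi> powr \<beta>"
    using \<Phi> s beta G_at_radial_point_pos[OF x0 s] by (intro mult_left_mono powr_mono2) auto
  ultimately show ?thesis by linarith
qed

lemma upper_bound:
  assumes N: "\<And>s. N \<le> s \<Longrightarrow> (SUP x\<in>sphere 0 1. G x (s *\<^sub>R x)) * s powr \<beta> < 1"
    and bdd: "\<And>s. 0 < s \<Longrightarrow> bdd_above ((\<lambda>x. G x (s *\<^sub>R x)) ` sphere 0 1)"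
    and x: "x \<in> sphere 0 1" and t: "0 \<le> t" "ereal t < T"
  shows "u x t \<le> max (SUP x\<in>sphere 0 1. u x 0) N"
proof -
  obtain x0 t0 where x0: "x0 \<in> sphere 0 1" and t0: "0 \<le> t0" "t0 \<le> t"
    and max: "\<And>x s. x \<in> sphere 0 1 \<Longrightarrow> 0 \<le> s \<Longrightarrow> s \<le> t \<Longrightarrow> u x s \<le> u x0 t0"
    using attains_max[OF t] by blast
  have "u x0 t0 \<le> max (SUP x\<in>sphere 0 1. u x 0) N"
  proof (cases "t0 = 0")
    case True
    have "u x0 0 \<le> (SUP x\<in>sphere 0 1. u x 0)"
      using x0 max t(1) True by (intro cSUP_upper bdd_aboveI2[where M = "u x0 0"]) auto
    then show ?thesis using True by simp
  next
    case False
    let ?s = "u x0 t0"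
    have t0T: "ereal t0 < T" using t0(2) t(2) by (auto intro: le_less_trans[of _ "ereal t"])
    then have s: "?s > 0" using solution_at(1)[OF x0 t0(1)] by simp
    have "1 \<le> G x0 (?s *\<^sub>R x0) * ?s powr \<beta>"
      using False t0 max by (intro inequality_at_max_point[OF x0 _ t0T]) auto
    also have "\<dots> \<le> (SUP x\<in>sphere 0 1. G x (?s *\<^sub>R x)) * ?s powr \<beta>"
      using bdd[OF s] x0 by (intro mult_right_mono cSUP_upper) auto
    finally have "\<not> N \<le> ?s" using N by (meson not_less)
    then show ?thesis by simp
  qed
  then show ?thesis using max[OF x t(1) order.refl] by linarith
qed

lemma lower_bound:
  assumes \<delta>: "\<And>s. 0 < s \<Longrightarrow> s < \<delta> \<Longrightarrow> 1 < (INF x\<in>sphere 0 1. G x (s *\<^sub>R x)) * s powr \<beta>"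
    and x: "x \<in> sphere 0 1" and t: "0 \<le> t" "ereal t < T"
  shows "min (INF x\<in>sphere 0 1. u x 0) \<delta> \<le> u x t"
proof -
  obtain x0 t0 where x0: "x0 \<in> sphere 0 1" and t0: "0 \<le> t0" "t0 \<le> t"
    and min: "\<And>x s. x \<in> sphere 0 1 \<Longrightarrow> 0 \<le> s \<Longrightarrow> s \<le> t \<Longrightarrow> u x0 t0 \<le> u x s"
    using attains_min[OF t] by blast
  have "min (INF x\<in>sphere 0 1. u x 0) \<delta> \<le> u x0 t0"
  proof (cases "t0 = 0")
    case True
    have "(INF x\<in>sphere 0 1. u x 0) \<le> u x0 0"
      using x0 min t(1) True by (intro cINF_lower bdd_belowI2[where m = "u x0 0"]) auto
    then show ?thesis using True by simp
  next
    case False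
    let ?s = "u x0 t0"
    have t0T: "ereal t0 < T" using t0(2) t(2) by (auto intro: le_less_trans[of _ "ereal t"])
    then have s: "?s > 0" using solution_at(1)[OF x0 t0(1)] by simp
    have "(INF x\<in>sphere 0 1. G x (?s *\<^sub>R x)) * ?s powr \<beta> \<le> G x0 (?s *\<^sub>R x0) * ?s powr \<beta>"
      using x0 G_at_radial_point_pos[OF _ s]
      by (intro mult_right_mono cINF_lower bdd_belowI2[where m = 0]) (auto simp: less_imp_le)
    also have "\<dots> \<le> 1"
      using False t0 min by (intro inequality_at_min_point[OF x0 _ t0T]) auto
    finally have "\<not> ?s < \<delta>" using \<delta> s by (meson not_less)
    then show ?thesis by simp
  qed
  then show ?thesis using min[OF x t(1) order.refl] by linarith
qed

end

theorem lemma4p1: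
  fixes G :: "real^'m \<Rightarrow> real^'m \<Rightarrow> real" and \<beta> M m :: real
  assumes dim: "CARD('m) = Suc CARD('k)"
    and beta: "\<beta> > 0"
    and G_smooth: "smooth_on_set {(x, X). x \<in> sphere 0 1 \<and> x \<bullet> X > 0} (\<lambda>(x, X). G x X)"
    and G_pos: "\<forall>x\<in>sphere 0 1. \<forall>X. x \<bullet> X > 0 \<longrightarrow> G x X > 0"
    and lim_top: "Limsup at_top (\<lambda>s. ereal ((SUP x\<in>sphere 0 1. G x (s *\<^sub>R x)) * s powr \<beta>)) < 1"
    and lim_zero: "1 < Liminf (at_right 0) (\<lambda>s. ereal ((INF x\<in>sphere 0 1. G x (s *\<^sub>R x)) * s powr \<beta>))"
  shows "\<exists>C>0. \<forall>(F :: real^'k \<Rightarrow> real) u T.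
           admissible_F \<beta> F \<and> flow_solution G \<beta> F u T \<and>
           (SUP x\<in>sphere 0 1. u x 0) = M \<and> (INF x\<in>sphere 0 1. u x 0) = m
           \<longrightarrow> (\<forall>x\<in>sphere 0 1. \<forall>t. 0 \<le> t \<and> ereal t < T \<longrightarrow> 1 / C \<le> u x t \<and> u x t \<le> C)"
proof -
  obtain N where N: "\<And>s. N \<le> s \<Longrightarrow> (SUP x\<in>sphere 0 1. G x (s *\<^sub>R x)) * s powr \<beta> < 1"
    using Limsup_lessD[OF lim_top] by (auto simp: eventually_at_top_linorder)
  obtain \<delta> where \<delta>: "\<delta> > 0"
    "\<And>s. 0 < s \<Longrightarrow> s < \<delta> \<Longrightarrow> 1 < (INF x\<in>sphere 0 1. G x (s *\<^sub>R x)) * s powr \<beta>"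
    using less_LiminfD[OF lim_zero] by (auto simp: eventually_at_right_field)
  define C where "C = max (max M N) (max (1 / m) (1 / \<delta>))"
  have C: "C > 0" "max M N \<le> C" "1 / m \<le> C" "1 / \<delta> \<le> C"
    using \<delta>(1) by (auto simp: C_def less_max_iff_disj)
  show ?thesis
  proof (rule exI[of _ C], intro conjI[OF C(1)] allI impI ballI)
    fix F :: "real^'k \<Rightarrow> real" and u T and x :: "real^'m" and t :: real
    assume H: "admissible_F \<beta> F \<and> flow_solution G \<beta> F u T \<and>
      (SUP x\<in>sphere 0 1. u x 0) = M \<and> (INF x\<in>sphere 0 1. u x 0) = m"
      and x: "x \<in> sphere 0 1" and t: "0 \<le> t \<and> ereal t < T"
    interpret convex_flow G \<beta> F u T
      using dim beta G_pos H by unfold_locales auto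
    have "0 < m" using initial_INF_pos H by simp
    then have "1 / C \<le> min m \<delta>" using C \<delta>(1) by (auto simp: field_simps)
    also have "\<dots> \<le> u x t" using lower_bound[OF \<delta>(2) x] t H by auto
    finally have "1 / C \<le> u x t" .
    moreover have "u x t \<le> max M N"
      using upper_bound[OF N sphere_bdd_above_G[OF G_smooth] x] t H by auto
    ultimately show "1 / C \<le> u x t \<and> u x t \<le> C" using C(2) by linarith
  qed
qed

end
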